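(* Let $n\ge 3$ and let $H:=\sum_{1\le i\ne j\le n}[X_{ij}(R),X_{ji}(R)]\subseteq \mathfrak{stl}_n(R)$ (the $K$-span of all brackets $[X_{ij}(a),X_{ji}(b)]$, $a,b\in R$). Then $H$ is a subalgebra of $\mathfrak{stl}_n(R)$ containing the center of $\mathfrak{stl}_n(R)$, $[H,X_{ij}(R)]\subseteq X_{ij}(R)$ for all $i\neq j$, and $$\mathfrak{stl}_n(R)=H\oplus\bigoplus_{1\le i\ne j\le n}X_{ij}(R)$$ as $K$-modules, where $X_{ij}(R)=\{X_{ij}(a):a\in R\}$.
   Context: $K$ is a unital commutative ring and $R$ is a unital associative $K$-algebra which is free as a $K$-module with a $K$-basis containing $1$. A Leibniz algebra over $K$ is a $K$-module $L$ with a $K$-bilinear bracket satisfying $[x,[y,z]]=[[x,y],z]-[[x,z],y]$ for all $x,y,z\in L$. The center of $L$ is $\{z\in L: [z,L]=[L,z]=0\}$. For $n\ge 3$, the Steinberg Leibniz algebra $\mathfrak{stl}_n(R)$ is the Leibniz algebra over $K$ generated by symbols $X_{ij}(a)$, $a\in R$, $1\le i\ne j\le n$, subject to: $X_{ij}(k_1a+k_2b)=k_1X_{ij}(a)+k_2X_{ij}(b)$ ($k_1,k_2\in K$); $[X_{ij}(a),X_{jk}(b)]=X_{ik}(ab)$ and $[X_{ij}(a),X_{ki}(b)]=-X_{kj}(ba)$ for distinct $i,j,k$; $[X_{ij}(a),X_{kl}(b)]=0$ for $j\ne k$, $i\ne l$. *)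

theory Defs
  imports Main
begin

text \<open>K is the type 'k (comm_ring_1); R is the type 'r (ring_1) with a K-scalar
action sm making it a unital associative K-algebra.\<close>

definition is_K_algebra :: "('k::comm_ring_1 \<Rightarrow> 'r::ring_1 \<Rightarrow> 'r) \<Rightarrow> bool" where
  "is_K_algebra sm \<longleftrightarrow>
     (\<forall>k a b. sm k (a + b) = sm k a + sm k b) \<and>
     (\<forall>k l a. sm (k + l) a = sm k a + sm l a) \<and>
     (\<forall>k l a. sm (k * l) a = sm k (sm l a)) \<and>
     (\<forall>a. sm 1 a = a) \<and>
     (\<forall>k a b. sm k (a * b) = sm k a * b) \<and>
     (\<forall>k a b. sm k (a * b) = a * sm k b)"

definition is_K_basis :: "('k::comm_ring_1 \<Rightarrow> 'r::ring_1 \<Rightarrow> 'r) \<Rightarrow> 'r set \<Rightarrow> bool" where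
  "is_K_basis sm B \<longleftrightarrow>
     (\<forall>r. \<exists>!c. finite {b. c b \<noteq> 0} \<and> (\<forall>b. b \<notin> B \<longrightarrow> c b = 0) \<and>
              r = (\<Sum>b\<in>{b. c b \<noteq> 0}. sm (c b) b))"

section \<open>Expressions of the free (non-associative) K-algebra on the symbols X_ij(a)\<close>

datatype ('k, 'r) expr =
    Gen nat nat 'r
  | Zero
  | Add "('k, 'r) expr" "('k, 'r) expr"
  | Smul 'k "('k, 'r) expr"
  | Br "('k, 'r) expr" "('k, 'r) expr"

fun wf_expr :: "nat \<Rightarrow> ('k, 'r) expr \<Rightarrow> bool" where
  "wf_expr n (Gen i j a) \<longleftrightarrow> 1 \<le> i \<and> i \<le> n \<and> 1 \<le> j \<and> j \<le> n \<and> i \<noteq> j"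
| "wf_expr n Zero \<longleftrightarrow> True"
| "wf_expr n (Add x y) \<longleftrightarrow> wf_expr n x \<and> wf_expr n y"
| "wf_expr n (Smul k x) \<longleftrightarrow> wf_expr n x"
| "wf_expr n (Br x y) \<longleftrightarrow> wf_expr n x \<and> wf_expr n y"

definition valid_idx :: "nat \<Rightarrow> nat \<Rightarrow> bool" where
  "valid_idx n i \<longleftrightarrow> 1 \<le> i \<and> i \<le> n"

text \<open>The congruence defining st l_n(R): smallest congruence making the expressions a
Leibniz algebra over K and imposing the Steinberg relations.\<close>
inductive stl_eq :: "nat \<Rightarrow> ('k::comm_ring_1 \<Rightarrow> 'r::ring_1 \<Rightarrow> 'r) \<Rightarrow>
    ('k, 'r) expr \<Rightarrow> ('k, 'r) expr \<Rightarrow> bool"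
  for n :: nat and sm :: "'k::comm_ring_1 \<Rightarrow> 'r::ring_1 \<Rightarrow> 'r" where
  refl: "stl_eq n sm x x"
| sym: "stl_eq n sm x y \<Longrightarrow> stl_eq n sm y x"
| trans: "stl_eq n sm x y \<Longrightarrow> stl_eq n sm y z \<Longrightarrow> stl_eq n sm x z"
| cong_add: "stl_eq n sm x x' \<Longrightarrow> stl_eq n sm y y' \<Longrightarrow> stl_eq n sm (Add x y) (Add x' y')"
| cong_smul: "stl_eq n sm x x' \<Longrightarrow> stl_eq n sm (Smul k x) (Smul k x')"
| cong_br: "stl_eq n sm x x' \<Longrightarrow> stl_eq n sm y y' \<Longrightarrow> stl_eq n sm (Br x y) (Br x' y')"
| add_assoc: "stl_eq n sm (Add (Add x y) z) (Add x (Add y z))"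
| add_comm: "stl_eq n sm (Add x y) (Add y x)"
| add_zero: "stl_eq n sm (Add x Zero) x"
| add_neg: "stl_eq n sm (Add x (Smul (-1) x)) Zero"
| smul_add: "stl_eq n sm (Smul k (Add x y)) (Add (Smul k x) (Smul k y))"
| add_smul: "stl_eq n sm (Smul (k + l) x) (Add (Smul k x) (Smul l x))"
| smul_smul: "stl_eq n sm (Smul (k * l) x) (Smul k (Smul l x))"
| smul_one: "stl_eq n sm (Smul 1 x) x"
| br_add_left: "stl_eq n sm (Br (Add x y) z) (Add (Br x z) (Br y z))"
| br_add_right: "stl_eq n sm (Br x (Add y z)) (Add (Br x y) (Br x z))"
| br_smul_left: "stl_eq n sm (Br (Smul k x) y) (Smul k (Br x y))"
| br_smul_right: "stl_eq n sm (Br x (Smul k y)) (Smul k (Br x y))"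
| leibniz: "stl_eq n sm (Br x (Br y z)) (Add (Br (Br x y) z) (Smul (-1) (Br (Br x z) y)))"
| gen_lin: "valid_idx n i \<Longrightarrow> valid_idx n j \<Longrightarrow> i \<noteq> j \<Longrightarrow>
     stl_eq n sm (Gen i j (sm k1 a + sm k2 b)) (Add (Smul k1 (Gen i j a)) (Smul k2 (Gen i j b)))"
| gen_br1: "valid_idx n i \<Longrightarrow> valid_idx n j \<Longrightarrow> valid_idx n k \<Longrightarrow>
     i \<noteq> j \<Longrightarrow> j \<noteq> k \<Longrightarrow> i \<noteq> k \<Longrightarrow>
     stl_eq n sm (Br (Gen i j a) (Gen j k b)) (Gen i k (a * b))"
| gen_br2: "valid_idx n i \<Longrightarrow> valid_idx n j \<Longrightarrow> valid_idx n k \<Longrightarrow>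
     i \<noteq> j \<Longrightarrow> j \<noteq> k \<Longrightarrow> i \<noteq> k \<Longrightarrow>
     stl_eq n sm (Br (Gen i j a) (Gen k i b)) (Smul (-1) (Gen k j (b * a)))"
| gen_br0: "valid_idx n i \<Longrightarrow> valid_idx n j \<Longrightarrow> valid_idx n k \<Longrightarrow> valid_idx n l \<Longrightarrow>
     i \<noteq> j \<Longrightarrow> k \<noteq> l \<Longrightarrow> j \<noteq> k \<Longrightarrow> i \<noteq> l \<Longrightarrow>
     stl_eq n sm (Br (Gen i j a) (Gen k l b)) Zero"

inductive H_span :: "nat \<Rightarrow> ('k, 'r) expr \<Rightarrow> bool" for n :: nat where
  zero: "H_span n Zero"
| gen: "valid_idx n i \<Longrightarrow> valid_idx n j \<Longrightarrow> i \<noteq> j \<Longrightarrow> H_span n (Br (Gen i j a) (Gen j i b))"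
| add: "H_span n x \<Longrightarrow> H_span n y \<Longrightarrow> H_span n (Add x y)"
| smul: "H_span n x \<Longrightarrow> H_span n (Smul k x)"

definition in_H :: "nat \<Rightarrow> ('k::comm_ring_1 \<Rightarrow> 'r::ring_1 \<Rightarrow> 'r) \<Rightarrow> ('k, 'r) expr \<Rightarrow> bool" where
  "in_H n sm e \<longleftrightarrow> wf_expr n e \<and> (\<exists>h. H_span n h \<and> stl_eq n sm e h)"

definition in_X :: "nat \<Rightarrow> ('k::comm_ring_1 \<Rightarrow> 'r::ring_1 \<Rightarrow> 'r) \<Rightarrow> nat \<Rightarrow> nat \<Rightarrow> ('k, 'r) expr \<Rightarrow> bool" where
  "in_X n sm i j e \<longleftrightarrow> (\<exists>a. stl_eq n sm e (Gen i j a))"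

definition in_center :: "nat \<Rightarrow> ('k::comm_ring_1 \<Rightarrow> 'r::ring_1 \<Rightarrow> 'r) \<Rightarrow> ('k, 'r) expr \<Rightarrow> bool" where
  "in_center n sm z \<longleftrightarrow> wf_expr n z \<and>
     (\<forall>x. wf_expr n x \<longrightarrow> stl_eq n sm (Br z x) Zero \<and> stl_eq n sm (Br x z) Zero)"

definition offdiag :: "nat \<Rightarrow> (nat \<times> nat) list" where
  "offdiag n = [(i, j). i \<leftarrow> [1..<n+1], j \<leftarrow> [1..<n+1], i \<noteq> j]"

definition esum :: "('a \<Rightarrow> ('k, 'r) expr) \<Rightarrow> 'a list \<Rightarrow> ('k, 'r) expr" where
  "esum f xs = foldr (\<lambda>p acc. Add (f p) acc) xs Zero"

end

theory Submission
  imports Defs "HOL.Modules" "HOL-Library.Function_Algebras"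
begin

text \<open>
  Everything reduces to brackets of generators. Read as
  [[x,y],z] = [x,[y,z]] + [[x,z],y], the Leibniz identity and the Steinberg relations show
  that [[X_ij(a), X_ji(b)], X_kl(c)] lies in X_kl(R). When (k,l) is (i,j) or (j,i) one first
  factors X_kl(c) = [X_km(c), X_ml(1)] through a third index m; this is where n \<ge> 3 is used.
  Consequently H + \<Sum> X_ij(R) is closed under bracketing with generators, hence is everything,
  and H is closed under brackets.

  Directness of the sum and the statement about the center are read off from the
  representation X_ij(a) \<mapsto> a e_ij of st l_n(R) on n \<times> n matrices over R with the
  commutator bracket: H is mapped to diagonal matrices, and for a central z and i \<noteq> p the
  (i,q) entry of [z, e_pq] is the (i,p) entry of z.
\<close>

declare stl_eq.trans [trans]

locale K_algebra = module sm
  for sm :: "'k::comm_ring_1 \<Rightarrow> 'r::ring_1 \<Rightarrow> 'r" +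
  assumes scale_mult_left: "sm k (a * b) = sm k a * b"
    and scale_mult_right: "sm k (a * b) = a * sm k b"

lemma K_algebraI: "is_K_algebra sm \<Longrightarrow> K_algebra sm"
  unfolding is_K_algebra_def by unfold_locales metis+

section \<open>Matrices over R\<close>

type_synonym 'r mat = "nat \<Rightarrow> nat \<Rightarrow> 'r"

definition mat_mult :: "nat \<Rightarrow> 'r::semiring_0 mat \<Rightarrow> 'r mat \<Rightarrow> 'r mat" where
  "mat_mult n A B = (\<lambda>p q. \<Sum>r\<in>{1..n}. A p r * B r q)"

definition mat_bracket :: "nat \<Rightarrow> 'r::ring mat \<Rightarrow> 'r mat \<Rightarrow> 'r mat" where
  "mat_bracket n A B = mat_mult n A B - mat_mult n B A"

definition mat_unit :: "nat \<Rightarrow> nat \<Rightarrow> 'r::zero \<Rightarrow> 'r mat" where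
  "mat_unit i j a = (\<lambda>p q. if p = i \<and> q = j then a else 0)"

lemma mat_unit_apply: "mat_unit i j a p q = (if p = i \<and> q = j then a else 0)"
  by (simp add: mat_unit_def)

lemma mat_mult_assoc: "mat_mult n (mat_mult n A B) C = mat_mult n A (mat_mult n B C)"
  unfolding mat_mult_def
  by (auto simp: fun_eq_iff sum_distrib_left sum_distrib_right mult.assoc intro: sum.swap)

lemma mat_mult_add_left: "mat_mult n (A + B) C = mat_mult n A C + mat_mult n B C"
  and mat_mult_add_right: "mat_mult n C (A + B) = mat_mult n C A + mat_mult n C B"
  by (simp_all add: mat_mult_def fun_eq_iff algebra_simps sum.distrib)

lemma mat_mult_diff_left: "mat_mult n (A - B :: 'r::ring mat) C = mat_mult n A C - mat_mult n B C"
  and mat_mult_diff_right: "mat_mult n C (A - B) = mat_mult n C A - mat_mult n C B"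
  by (simp_all add: mat_mult_def fun_eq_iff left_diff_distrib right_diff_distrib sum_subtractf)

lemma mat_bracket_add_left: "mat_bracket n (A + B) C = mat_bracket n A C + mat_bracket n B C"
  and mat_bracket_add_right: "mat_bracket n C (A + B) = mat_bracket n C A + mat_bracket n C B"
  by (simp_all add: mat_bracket_def mat_mult_add_left mat_mult_add_right)

lemma mat_bracket_leibniz:
  "mat_bracket n A (mat_bracket n B C)
     = mat_bracket n (mat_bracket n A B) C - mat_bracket n (mat_bracket n A C) B"
  by (simp add: mat_bracket_def mat_mult_diff_left mat_mult_diff_right mat_mult_assoc)

lemma mat_mult_unit_unit:
  "mat_mult n (mat_unit i j a) (mat_unit k l b)
     = (if j = k \<and> valid_idx n j then mat_unit i l (a * b) else 0)"
proof (intro ext)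
  fix p q
  have "(\<Sum>r\<in>{1..n}. mat_unit i j a p r * mat_unit k l b r q)
      = (\<Sum>r\<in>{1..n}. if r = j then (if p = i \<and> j = k \<and> q = l then a * b else 0) else 0)"
    by (rule sum.cong) (auto simp: mat_unit_def)
  then show "mat_mult n (mat_unit i j a) (mat_unit k l b) p q
      = (if j = k \<and> valid_idx n j then mat_unit i l (a * b) else 0) p q"
    by (auto simp: mat_mult_def mat_unit_def valid_idx_def)
qed

lemma mat_mult_unit_right_entry:
  "valid_idx n p \<Longrightarrow> mat_mult n A (mat_unit p q c) i q = A i p * c"
  by (simp add: mat_mult_def mat_unit_def valid_idx_def if_distrib cong: if_cong)

lemma mat_mult_unit_left_entry: "i \<noteq> p \<Longrightarrow> mat_mult n (mat_unit p q c) A i q' = 0"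
  by (simp add: mat_mult_def mat_unit_def)

context K_algebra
begin

definition mat_scale :: "'k \<Rightarrow> 'r mat \<Rightarrow> 'r mat" where
  "mat_scale k A = (\<lambda>p q. sm k (A p q))"

lemma mat_mult_scale_left: "mat_mult n (mat_scale k A) B = mat_scale k (mat_mult n A B)"
  and mat_mult_scale_right: "mat_mult n A (mat_scale k B) = mat_scale k (mat_mult n A B)"
  by (simp add: mat_mult_def mat_scale_def scale_sum_right scale_mult_left)
    (simp add: mat_mult_def mat_scale_def scale_sum_right scale_mult_right)

lemma mat_bracket_scale_left: "mat_bracket n (mat_scale k A) B = mat_scale k (mat_bracket n A B)"
  and mat_bracket_scale_right: "mat_bracket n A (mat_scale k B) = mat_scale k (mat_bracket n A B)"
  by (simp_all add: mat_bracket_def mat_mult_scale_left mat_mult_scale_right)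
    (simp_all add: mat_scale_def fun_eq_iff scale_right_diff_distrib)

lemma mat_scale_minus_one: "mat_scale (-1) A = - A"
  by (simp add: mat_scale_def fun_eq_iff)

end

definition offdiag_pos :: "nat \<Rightarrow> nat \<Rightarrow> nat \<Rightarrow> bool" where
  "offdiag_pos n i j \<longleftrightarrow> valid_idx n i \<and> valid_idx n j \<and> i \<noteq> j"

lemma offdiag_pos_sym: "offdiag_pos n i j \<Longrightarrow> offdiag_pos n j i"
  by (auto simp: offdiag_pos_def)

lemma set_offdiag: "(i, j) \<in> set (offdiag n) \<longleftrightarrow> offdiag_pos n i j"
  by (auto simp: offdiag_def offdiag_pos_def valid_idx_def)

lemma distinct_offdiag: "distinct (offdiag n)"
  unfolding offdiag_def by (auto intro!: distinct_concat simp: distinct_map inj_on_def)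

lemma esum_Nil [simp]: "esum f [] = Zero"
  and esum_Cons [simp]: "esum f (x # xs) = Add (f x) (esum f xs)"
  by (simp_all add: esum_def)

lemma wf_expr_H_span: "H_span n h \<Longrightarrow> wf_expr n h"
  by (induction rule: H_span.induct) (auto simp: valid_idx_def)

locale steinberg_relation =
  fixes n :: nat and sm :: "'k::comm_ring_1 \<Rightarrow> 'r::ring_1 \<Rightarrow> 'r"
begin

abbreviation stl_equiv :: "('k, 'r) expr \<Rightarrow> ('k, 'r) expr \<Rightarrow> bool"  (infix "\<simeq>" 50)
  where "x \<simeq> y \<equiv> stl_eq n sm x y"

lemma cong_add_left: "x \<simeq> x' \<Longrightarrow> Add x y \<simeq> Add x' y"
  and cong_add_right: "y \<simeq> y' \<Longrightarrow> Add x y \<simeq> Add x y'"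
  and cong_br_left: "x \<simeq> x' \<Longrightarrow> Br x y \<simeq> Br x' y"
  and cong_br_right: "y \<simeq> y' \<Longrightarrow> Br x y \<simeq> Br x y'"
  by (simp_all add: stl_eq.cong_add stl_eq.cong_br stl_eq.refl)

lemma smul_zero_left: "Smul 0 x \<simeq> Zero"
proof -
  let ?y = "Smul 0 x"
  have twice: "?y \<simeq> Add ?y ?y" using stl_eq.add_smul[of n sm 0 0 x] by simp
  have "Zero \<simeq> Add ?y (Smul (-1) ?y)" by (rule stl_eq.sym[OF stl_eq.add_neg])
  also have "\<dots> \<simeq> Add (Add ?y ?y) (Smul (-1) ?y)" by (rule cong_add_left[OF twice])
  also have "\<dots> \<simeq> Add ?y (Add ?y (Smul (-1) ?y))" by (rule stl_eq.add_assoc)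
  also have "\<dots> \<simeq> Add ?y Zero" by (rule cong_add_right[OF stl_eq.add_neg])
  also have "\<dots> \<simeq> ?y" by (rule stl_eq.add_zero)
  finally show ?thesis by (rule stl_eq.sym)
qed

lemma add_zero_left: "Add Zero x \<simeq> x"
  by (rule stl_eq.trans[OF stl_eq.add_comm stl_eq.add_zero])

lemma smul_zero_right: "Smul k Zero \<simeq> Zero"
proof -
  have "Smul k Zero \<simeq> Smul k (Smul 0 Zero)"
    by (rule stl_eq.cong_smul[OF stl_eq.sym[OF smul_zero_left]])
  also have "\<dots> \<simeq> Smul (k * 0) Zero" by (rule stl_eq.sym[OF stl_eq.smul_smul])
  also have "\<dots> \<simeq> Zero" using smul_zero_left by simp
  finally show ?thesis .
qed

lemma br_zero_left: "Br Zero x \<simeq> Zero"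
proof -
  have "Br Zero x \<simeq> Br (Smul 0 Zero) x" by (rule cong_br_left[OF stl_eq.sym[OF smul_zero_left]])
  also have "\<dots> \<simeq> Smul 0 (Br Zero x)" by (rule stl_eq.br_smul_left)
  also have "\<dots> \<simeq> Zero" by (rule smul_zero_left)
  finally show ?thesis .
qed

lemma br_zero_right: "Br x Zero \<simeq> Zero"
proof -
  have "Br x Zero \<simeq> Br x (Smul 0 Zero)" by (rule cong_br_right[OF stl_eq.sym[OF smul_zero_left]])
  also have "\<dots> \<simeq> Smul 0 (Br x Zero)" by (rule stl_eq.br_smul_right)
  also have "\<dots> \<simeq> Zero" by (rule smul_zero_left)
  finally show ?thesis .
qed

lemma add_add_swap: "Add (Add a b) (Add c d) \<simeq> Add (Add a c) (Add b d)"
proof -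
  have "Add (Add a b) (Add c d) \<simeq> Add a (Add (Add b c) d)"
    by (rule stl_eq.trans[OF stl_eq.add_assoc cong_add_right[OF stl_eq.sym[OF stl_eq.add_assoc]]])
  also have "\<dots> \<simeq> Add a (Add (Add c b) d)"
    by (rule cong_add_right[OF cong_add_left[OF stl_eq.add_comm]])
  also have "\<dots> \<simeq> Add (Add a c) (Add b d)"
    by (rule stl_eq.trans[OF cong_add_right[OF stl_eq.add_assoc] stl_eq.sym[OF stl_eq.add_assoc]])
  finally show ?thesis .
qed

lemma br_br_left: "Br (Br x y) z \<simeq> Add (Br x (Br y z)) (Br (Br x z) y)"
proof -
  let ?u = "Br (Br x y) z" and ?v = "Br (Br x z) y"
  have "Add (Br x (Br y z)) ?v \<simeq> Add (Add ?u (Smul (-1) ?v)) ?v"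
    by (rule cong_add_left[OF stl_eq.leibniz])
  also have "\<dots> \<simeq> Add ?u (Add ?v (Smul (-1) ?v))"
    by (rule stl_eq.trans[OF stl_eq.add_assoc cong_add_right[OF stl_eq.add_comm]])
  also have "\<dots> \<simeq> ?u" by (rule stl_eq.trans[OF cong_add_right[OF stl_eq.add_neg] stl_eq.add_zero])
  finally show ?thesis by (rule stl_eq.sym)
qed

lemma esum_cong: "(\<And>p. p \<in> set xs \<Longrightarrow> f p \<simeq> g p) \<Longrightarrow> esum f xs \<simeq> esum g xs"
  by (induction xs) (auto intro: stl_eq.refl stl_eq.cong_add)

lemma esum_zero: "(\<And>p. p \<in> set xs \<Longrightarrow> f p \<simeq> Zero) \<Longrightarrow> esum f xs \<simeq> Zero"
  by (induction xs) (auto intro: stl_eq.refl stl_eq.trans[OF stl_eq.cong_add stl_eq.add_zero])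

lemma esum_add: "esum (\<lambda>p. Add (f p) (g p)) xs \<simeq> Add (esum f xs) (esum g xs)"
proof (induction xs)
  case Nil
  show ?case by (simp add: stl_eq.sym stl_eq.add_zero)
next
  case (Cons x xs)
  then show ?case by (simp add: stl_eq.trans[OF cong_add_right add_add_swap])
qed

lemma esum_smul: "esum (\<lambda>p. Smul k (f p)) xs \<simeq> Smul k (esum f xs)"
proof (induction xs)
  case Nil
  show ?case by (simp add: stl_eq.sym smul_zero_right)
next
  case (Cons x xs)
  then show ?case by (simp add: stl_eq.trans[OF cong_add_right stl_eq.sym[OF stl_eq.smul_add]])
qed

lemma br_esum_left: "Br (esum f xs) y \<simeq> esum (\<lambda>p. Br (f p) y) xs"
proof (induction xs)
  case Nil
  show ?case by (simp add: br_zero_left)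
next
  case (Cons x xs)
  then show ?case by (simp add: stl_eq.trans[OF stl_eq.br_add_left cong_add_right])
qed

lemma esum_single:
  assumes "distinct xs" "q \<in> set xs" "\<And>p. p \<in> set xs \<Longrightarrow> p \<noteq> q \<Longrightarrow> f p \<simeq> Zero"
  shows "esum f xs \<simeq> f q"
  using assms
proof (induction xs)
  case (Cons x xs)
  show ?case
  proof (cases "x = q")
    case True
    with Cons.prems have "esum f xs \<simeq> Zero" by (auto intro: esum_zero)
    with True show ?thesis by (simp add: stl_eq.trans[OF cong_add_right stl_eq.add_zero])
  next
    case False
    with Cons have "esum f (x # xs) \<simeq> Add Zero (f q)" by (auto intro: stl_eq.cong_add)
    then show ?thesis by (rule stl_eq.trans[OF _ add_zero_left])
  qed
qed simp

lemma in_H_zero: "in_H n sm Zero"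
  unfolding in_H_def by (metis H_span.zero stl_eq.refl wf_expr.simps(2))

lemma in_H_add: "in_H n sm x \<Longrightarrow> in_H n sm y \<Longrightarrow> in_H n sm (Add x y)"
  unfolding in_H_def by (metis H_span.add stl_eq.cong_add wf_expr.simps(3))

lemma in_H_smul: "in_H n sm x \<Longrightarrow> in_H n sm (Smul k x)"
  unfolding in_H_def by (metis H_span.smul stl_eq.cong_smul wf_expr.simps(4))

end

locale steinberg = steinberg_relation n sm + K_algebra sm
  for n :: nat and sm :: "'k::comm_ring_1 \<Rightarrow> 'r::ring_1 \<Rightarrow> 'r"
begin

lemma smul_gen: "offdiag_pos n i j \<Longrightarrow> Smul k (Gen i j u) \<simeq> Gen i j (sm k u)"
proof -
  assume ij: "offdiag_pos n i j"
  have "Gen i j (sm k u + sm 0 u) \<simeq> Add (Smul k (Gen i j u)) (Smul 0 (Gen i j u))"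
    using ij unfolding offdiag_pos_def by (blast intro: stl_eq.gen_lin)
  also have "\<dots> \<simeq> Smul k (Gen i j u)"
    by (rule stl_eq.trans[OF cong_add_right[OF smul_zero_left] stl_eq.add_zero])
  finally show ?thesis by (simp add: stl_eq.sym)
qed

lemma add_gen: "offdiag_pos n i j \<Longrightarrow> Add (Gen i j u) (Gen i j v) \<simeq> Gen i j (u + v)"
proof -
  assume ij: "offdiag_pos n i j"
  have "Gen i j (sm 1 u + sm 1 v) \<simeq> Add (Smul 1 (Gen i j u)) (Smul 1 (Gen i j v))"
    using ij unfolding offdiag_pos_def by (blast intro: stl_eq.gen_lin)
  also have "\<dots> \<simeq> Add (Gen i j u) (Gen i j v)"
    by (rule stl_eq.cong_add[OF stl_eq.smul_one stl_eq.smul_one])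
  finally show ?thesis by (simp add: stl_eq.sym)
qed

lemma gen_zero: "offdiag_pos n i j \<Longrightarrow> Gen i j 0 \<simeq> Zero"
  using stl_eq.trans[OF stl_eq.sym[OF smul_gen[of i j 0 0]] smul_zero_left] by simp

lemma br_gen_gen_chain:
  "offdiag_pos n i j \<Longrightarrow> offdiag_pos n j k \<Longrightarrow> offdiag_pos n i k \<Longrightarrow>
    Br (Gen i j a) (Gen j k b) \<simeq> Gen i k (a * b)"
  by (simp add: offdiag_pos_def stl_eq.gen_br1)

lemma br_gen_gen_cochain:
  "offdiag_pos n i j \<Longrightarrow> offdiag_pos n k i \<Longrightarrow> offdiag_pos n k j \<Longrightarrow>
    Br (Gen i j a) (Gen k i b) \<simeq> Gen k j (- (b * a))"
  using stl_eq.trans[OF stl_eq.gen_br2 smul_gen[of k j "-1" "b * a"]]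
  by (simp add: offdiag_pos_def)

lemma br_gen_gen_zero:
  "offdiag_pos n i j \<Longrightarrow> offdiag_pos n k l \<Longrightarrow> j \<noteq> k \<Longrightarrow> i \<noteq> l \<Longrightarrow>
    Br (Gen i j a) (Gen k l b) \<simeq> Zero"
  by (simp add: offdiag_pos_def stl_eq.gen_br0)

section \<open>The matrix representation\<close>

fun rep :: "('k, 'r) expr \<Rightarrow> 'r mat" where
  "rep (Gen i j a) = mat_unit i j a"
| "rep Zero = 0"
| "rep (Add x y) = rep x + rep y"
| "rep (Smul k x) = mat_scale k (rep x)"
| "rep (Br x y) = mat_bracket n (rep x) (rep y)"

lemma rep_stl_eq: "x \<simeq> y \<Longrightarrow> rep x = rep y"
proof (induction rule: stl_eq.induct)
  case (leibniz x y z)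
  then show ?case by (simp add: mat_bracket_leibniz mat_scale_minus_one)
next
  case (gen_lin i j k1 a k2 b)
  then show ?case by (simp add: mat_unit_def mat_scale_def fun_eq_iff)
next
  case (gen_br1 i j k a b)
  then show ?case by (simp add: mat_bracket_def mat_mult_unit_unit)
next
  case (gen_br2 i j k a b)
  then show ?case by (simp add: mat_bracket_def mat_mult_unit_unit mat_scale_minus_one)
next
  case (gen_br0 i j k l a b)
  then show ?case by (simp add: mat_bracket_def mat_mult_unit_unit)
qed (simp_all add: mat_bracket_add_left mat_bracket_add_right mat_bracket_scale_left
    mat_bracket_scale_right, simp_all add: fun_eq_iff mat_scale_def algebra_simps)

abbreviation gen_sum :: "'r mat \<Rightarrow> ('k, 'r) expr" where
  "gen_sum a \<equiv> esum (\<lambda>(i, j). Gen i j (a i j)) (offdiag n)"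

lemma add_gen_sum: "Add (gen_sum a) (gen_sum b) \<simeq> gen_sum (a + b)"
proof -
  have "Add (gen_sum a) (gen_sum b)
      \<simeq> esum (\<lambda>p. Add ((\<lambda>(i, j). Gen i j (a i j)) p) ((\<lambda>(i, j). Gen i j (b i j)) p)) (offdiag n)"
    by (rule stl_eq.sym[OF esum_add])
  also have "\<dots> \<simeq> gen_sum (a + b)"
    by (rule esum_cong) (auto simp: set_offdiag add_gen)
  finally show ?thesis .
qed

lemma smul_gen_sum: "Smul k (gen_sum a) \<simeq> gen_sum (mat_scale k a)"
proof -
  have "Smul k (gen_sum a) \<simeq> esum (\<lambda>p. Smul k ((\<lambda>(i, j). Gen i j (a i j)) p)) (offdiag n)"
    by (rule stl_eq.sym[OF esum_smul])
  also have "\<dots> \<simeq> gen_sum (mat_scale k a)"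
    by (rule esum_cong) (auto simp: set_offdiag mat_scale_def smul_gen)
  finally show ?thesis .
qed

lemma gen_sum_zero: "(\<And>i j. offdiag_pos n i j \<Longrightarrow> a i j = 0) \<Longrightarrow> gen_sum a \<simeq> Zero"
  by (rule esum_zero) (auto simp: set_offdiag gen_zero)

lemma gen_sum_unit: "offdiag_pos n i j \<Longrightarrow> gen_sum (mat_unit i j c) \<simeq> Gen i j c"
proof -
  assume ij: "offdiag_pos n i j"
  have "gen_sum (mat_unit i j c) \<simeq> (\<lambda>(p, q). Gen p q (mat_unit i j c p q)) (i, j)"
    using ij by (intro esum_single[OF distinct_offdiag])
      (auto simp: set_offdiag mat_unit_apply gen_zero split: if_splits)
  then show ?thesis by (simp add: mat_unit_apply)
qed

lemma rep_esum_gen: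
  "distinct xs \<Longrightarrow>
    rep (esum (\<lambda>(i, j). Gen i j (a i j)) xs) p q = (if (p, q) \<in> set xs then a p q else 0)"
  by (induction xs) (auto simp: mat_unit_apply split: if_splits)

lemma rep_gen_sum: "offdiag_pos n p q \<Longrightarrow> rep (gen_sum a) p q = a p q"
  by (simp add: rep_esum_gen distinct_offdiag set_offdiag)

lemma rep_H_span: "H_span n h \<Longrightarrow> p \<noteq> q \<Longrightarrow> rep h p q = 0"
  by (induction rule: H_span.induct)
    (auto simp: mat_bracket_def mat_mult_unit_unit mat_unit_apply mat_scale_def)

lemma rep_in_H: "in_H n sm h \<Longrightarrow> p \<noteq> q \<Longrightarrow> rep h p q = 0"
  unfolding in_H_def using rep_H_span rep_stl_eq by metis

lemma gen_sum_coeff_eq_zero: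
  assumes "in_H n sm h" and "Add h (gen_sum a) \<simeq> Zero" and "offdiag_pos n i j"
  shows "a i j = 0"
proof -
  have "rep (Add h (gen_sum a)) i j = 0" using rep_stl_eq[OF assms(2)] by simp
  with assms show ?thesis by (simp add: rep_in_H rep_gen_sum offdiag_pos_def)
qed

lemma direct_sum_H_part:
  assumes "in_H n sm h" and sum_zero: "Add h (gen_sum a) \<simeq> Zero"
  shows "h \<simeq> Zero"
proof -
  have "gen_sum a \<simeq> Zero"
    using gen_sum_coeff_eq_zero[OF assms] by (rule gen_sum_zero)
  then have "h \<simeq> Add h (gen_sum a)"
    by (rule stl_eq.trans[OF stl_eq.sym[OF stl_eq.add_zero] cong_add_right[OF stl_eq.sym]])
  then show ?thesis using sum_zero by (rule stl_eq.trans)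
qed

lemma direct_sum_X_part:
  "in_H n sm h \<Longrightarrow> Add h (gen_sum a) \<simeq> Zero \<Longrightarrow> offdiag_pos n i j \<Longrightarrow> Gen i j (a i j) \<simeq> Zero"
  using gen_sum_coeff_eq_zero[of h a i j] gen_zero[of i j] by simp

section \<open>Brackets of H with the root spaces X_ij(R)\<close>

lemma in_X_gen: "in_X n sm k l (Gen k l c)"
  unfolding in_X_def by (blast intro: stl_eq.refl)

lemma in_X_cong: "e \<simeq> e' \<Longrightarrow> in_X n sm k l e' \<Longrightarrow> in_X n sm k l e"
  unfolding in_X_def by (blast intro: stl_eq.trans)

lemma in_X_zero: "offdiag_pos n k l \<Longrightarrow> e \<simeq> Zero \<Longrightarrow> in_X n sm k l e"
  unfolding in_X_def by (blast intro: stl_eq.trans stl_eq.sym gen_zero)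

lemma in_X_add: "offdiag_pos n k l \<Longrightarrow> in_X n sm k l x \<Longrightarrow> in_X n sm k l y \<Longrightarrow> in_X n sm k l (Add x y)"
  unfolding in_X_def by (blast intro: stl_eq.trans stl_eq.cong_add add_gen)

lemma in_X_smul: "offdiag_pos n k l \<Longrightarrow> in_X n sm k l x \<Longrightarrow> in_X n sm k l (Smul c x)"
  unfolding in_X_def by (blast intro: stl_eq.trans stl_eq.cong_smul smul_gen)

lemma in_X_br_gen_br_gen_gen:
  assumes ij: "offdiag_pos n i j" and kl: "offdiag_pos n k l"
    and not_ij: "\<not> (k = i \<and> l = j)" and not_ji: "\<not> (k = j \<and> l = i)"
  shows "in_X n sm k l (Br (Gen i j a) (Br (Gen j i b) (Gen k l c)))"
proof -
  have ji: "offdiag_pos n j i" using ij by (rule offdiag_pos_sym)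
  consider (k_eq) "k = i" | (l_eq) "l = j" | (apart) "k \<noteq> i" "l \<noteq> j" by blast
  then show ?thesis
  proof cases
    case k_eq
    then have jl: "offdiag_pos n j l" and il: "offdiag_pos n i l"
      using ij kl not_ij by (auto simp: offdiag_pos_def)
    have "Br (Gen i j a) (Br (Gen j i b) (Gen i l c)) \<simeq> Gen i l (a * (b * c))"
      by (rule stl_eq.trans[OF cong_br_right[OF br_gen_gen_chain[OF ji il jl]]
            br_gen_gen_chain[OF ij jl il]])
    with k_eq show ?thesis by (simp add: in_X_cong[OF _ in_X_gen])
  next
    case l_eq
    then have kj: "offdiag_pos n k j" and ki: "offdiag_pos n k i"
      using ij kl not_ij by (auto simp: offdiag_pos_def)
    have "Br (Gen i j a) (Br (Gen j i b) (Gen k j c)) \<simeq> Gen k j (- (- (c * b) * a))"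
      by (rule stl_eq.trans[OF cong_br_right[OF br_gen_gen_cochain[OF ji kj ki]]
            br_gen_gen_cochain[OF ij ki kj]])
    with l_eq show ?thesis by (simp add: in_X_cong[OF _ in_X_gen])
  next
    case apart
    have "Br (Gen i j a) (Br (Gen j i b) (Gen k l c)) \<simeq> Zero"
      using apart by (intro stl_eq.trans[OF cong_br_right[OF br_gen_gen_zero[OF ji kl]]
            br_zero_right]) auto
    then show ?thesis by (rule in_X_zero[OF kl])
  qed
qed

lemma in_X_br_br_gen_gen_gen:
  assumes ij: "offdiag_pos n i j" and kl: "offdiag_pos n k l"
    and not_ij: "\<not> (k = i \<and> l = j)" and not_ji: "\<not> (k = j \<and> l = i)"
  shows "in_X n sm k l (Br (Br (Gen i j a) (Gen k l c)) (Gen j i b))"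
proof -
  have ji: "offdiag_pos n j i" using ij by (rule offdiag_pos_sym)
  consider (k_eq) "k = j" | (l_eq) "l = i" | (apart) "k \<noteq> j" "l \<noteq> i" by blast
  then show ?thesis
  proof cases
    case k_eq
    then have jl: "offdiag_pos n j l" and il: "offdiag_pos n i l"
      using ij kl not_ji by (auto simp: offdiag_pos_def)
    have "Br (Br (Gen i j a) (Gen j l c)) (Gen j i b) \<simeq> Gen j l (- (b * (a * c)))"
      by (rule stl_eq.trans[OF cong_br_left[OF br_gen_gen_chain[OF ij jl il]]
            br_gen_gen_cochain[OF il ji jl]])
    with k_eq show ?thesis by (simp add: in_X_cong[OF _ in_X_gen])
  next
    case l_eq
    then have kj: "offdiag_pos n k j" and ki: "offdiag_pos n k i"
      using ij kl not_ji by (auto simp: offdiag_pos_def)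
    have "Br (Br (Gen i j a) (Gen k i c)) (Gen j i b) \<simeq> Gen k i (- (c * a) * b)"
      by (rule stl_eq.trans[OF cong_br_left[OF br_gen_gen_cochain[OF ij ki kj]]
            br_gen_gen_chain[OF kj ji ki]])
    with l_eq show ?thesis by (simp add: in_X_cong[OF _ in_X_gen])
  next
    case apart
    have "Br (Br (Gen i j a) (Gen k l c)) (Gen j i b) \<simeq> Zero"
      using apart by (intro stl_eq.trans[OF cong_br_left[OF br_gen_gen_zero[OF ij kl]]
            br_zero_left]) auto
    then show ?thesis by (rule in_X_zero[OF kl])
  qed
qed

lemma in_X_br_H_gen_other:
  assumes "offdiag_pos n i j" and kl: "offdiag_pos n k l"
    and "\<not> (k = i \<and> l = j)" and "\<not> (k = j \<and> l = i)"
  shows "in_X n sm k l (Br (Br (Gen i j a) (Gen j i b)) (Gen k l c))"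
  using in_X_cong[OF br_br_left in_X_add[OF kl in_X_br_gen_br_gen_gen in_X_br_br_gen_gen_gen]] assms
  by blast

section \<open>The decomposition st l_n(R) = H + \<Sum> X_ij(R)\<close>

definition in_H_plus_X :: "('k, 'r) expr \<Rightarrow> bool" where
  "in_H_plus_X e \<longleftrightarrow> (\<exists>h a. H_span n h \<and> e \<simeq> Add h (gen_sum a))"

lemma in_H_plus_X_cong: "x \<simeq> y \<Longrightarrow> in_H_plus_X y \<Longrightarrow> in_H_plus_X x"
  unfolding in_H_plus_X_def by (blast intro: stl_eq.trans)

lemma in_H_plus_X_H_span: "H_span n h \<Longrightarrow> in_H_plus_X h"
proof -
  assume h: "H_span n h"
  have "h \<simeq> Add h (gen_sum 0)"
    by (rule stl_eq.trans[OF stl_eq.sym[OF stl_eq.add_zero] cong_add_right[OF stl_eq.sym]])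
      (simp add: gen_sum_zero)
  with h show ?thesis unfolding in_H_plus_X_def by blast
qed

lemma in_H_plus_X_gen: "offdiag_pos n i j \<Longrightarrow> in_H_plus_X (Gen i j c)"
proof -
  assume ij: "offdiag_pos n i j"
  have "Gen i j c \<simeq> Add Zero (gen_sum (mat_unit i j c))"
    by (rule stl_eq.sym[OF stl_eq.trans[OF add_zero_left gen_sum_unit[OF ij]]])
  then show ?thesis unfolding in_H_plus_X_def by (blast intro: H_span.zero)
qed

lemma in_H_plus_X_add: "in_H_plus_X x \<Longrightarrow> in_H_plus_X y \<Longrightarrow> in_H_plus_X (Add x y)"
proof -
  assume "in_H_plus_X x" "in_H_plus_X y"
  then obtain h1 a1 h2 a2 where "H_span n h1" "x \<simeq> Add h1 (gen_sum a1)"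
    and "H_span n h2" "y \<simeq> Add h2 (gen_sum a2)"
    unfolding in_H_plus_X_def by blast
  then have "Add x y \<simeq> Add (Add h1 h2) (gen_sum (a1 + a2))"
    by (intro stl_eq.trans[OF stl_eq.cong_add add_add_swap]
        stl_eq.trans[OF _ cong_add_right[OF add_gen_sum]])
  with \<open>H_span n h1\<close> \<open>H_span n h2\<close> show ?thesis
    unfolding in_H_plus_X_def by (blast intro: H_span.add)
qed

lemma in_H_plus_X_smul: "in_H_plus_X x \<Longrightarrow> in_H_plus_X (Smul k x)"
proof -
  assume "in_H_plus_X x"
  then obtain h a where "H_span n h" "x \<simeq> Add h (gen_sum a)"
    unfolding in_H_plus_X_def by blast
  then have "Smul k x \<simeq> Add (Smul k h) (gen_sum (mat_scale k a))"
    by (intro stl_eq.trans[OF stl_eq.cong_smul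
          stl_eq.trans[OF stl_eq.smul_add cong_add_right[OF smul_gen_sum]]])
  with \<open>H_span n h\<close> show ?thesis
    unfolding in_H_plus_X_def by (blast intro: H_span.smul)
qed

lemma in_H_plus_X_esum: "(\<And>p. p \<in> set xs \<Longrightarrow> in_H_plus_X (f p)) \<Longrightarrow> in_H_plus_X (esum f xs)"
  by (induction xs) (auto intro: in_H_plus_X_H_span H_span.zero in_H_plus_X_add)

lemma in_H_plus_X_br_gen_gen:
  assumes ij: "offdiag_pos n i j" and kl: "offdiag_pos n k l"
  shows "in_H_plus_X (Br (Gen i j a) (Gen k l b))"
proof -
  consider (opposite) "j = k" "i = l" | (chain) "j = k" "i \<noteq> l" | (cochain) "j \<noteq> k" "i = l"
    | (apart) "j \<noteq> k" "i \<noteq> l"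
    by blast
  then show ?thesis
  proof cases
    case opposite
    with ij show ?thesis by (auto simp: offdiag_pos_def intro: in_H_plus_X_H_span H_span.gen)
  next
    case chain
    with ij kl have jl: "offdiag_pos n j l" and il: "offdiag_pos n i l"
      by (auto simp: offdiag_pos_def)
    from chain show ?thesis
      using in_H_plus_X_cong[OF br_gen_gen_chain[OF ij jl il] in_H_plus_X_gen[OF il]] by simp
  next
    case cochain
    with ij kl have ki: "offdiag_pos n k i" and kj: "offdiag_pos n k j"
      by (auto simp: offdiag_pos_def)
    from cochain show ?thesis
      using in_H_plus_X_cong[OF br_gen_gen_cochain[OF ij ki kj] in_H_plus_X_gen[OF kj]] by simp
  next
    case apart
    show ?thesis
      by (rule in_H_plus_X_cong[OF br_gen_gen_zero[OF ij kl apart]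
            in_H_plus_X_H_span[OF H_span.zero]])
  qed
qed

end

lemma exists_third_idx: "3 \<le> n \<Longrightarrow> \<exists>m. valid_idx n m \<and> m \<noteq> i \<and> m \<noteq> j"
proof -
  assume "3 \<le> n"
  have "\<exists>m \<in> {1, 2, 3}. m \<noteq> i \<and> m \<noteq> j" by auto
  then obtain m where "m \<in> {1, 2, 3}" "m \<noteq> i" "m \<noteq> j" by blast
  with \<open>3 \<le> n\<close> show ?thesis by (intro exI[of _ m]) (auto simp: valid_idx_def)
qed

locale steinberg_3 = steinberg +
  assumes three_le_n: "3 \<le> n"
begin

lemma in_X_br_H_gen:
  assumes ij: "offdiag_pos n i j" and kl: "offdiag_pos n k l"
  shows "in_X n sm k l (Br (Br (Gen i j a) (Gen j i b)) (Gen k l c))"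
proof (cases "(k = i \<and> l = j) \<or> (k = j \<and> l = i)")
  case False
  with in_X_br_H_gen_other[OF ij kl] show ?thesis by blast
next
  case True
  let ?h = "Br (Gen i j a) (Gen j i b)"
  obtain m where m: "valid_idx n m" "m \<noteq> i" "m \<noteq> j"
    using exists_third_idx[OF three_le_n] by blast
  have km: "offdiag_pos n k m" and ml: "offdiag_pos n m l"
    using m True kl by (auto simp: offdiag_pos_def)
  \<comment> \<open>Factor X_kl(c) = [X_km(c), X_ml(1)]; neither (k,m) nor (m,l) is (i,j) or (j,i).\<close>
  obtain c1 where c1: "Br ?h (Gen k m c) \<simeq> Gen k m c1"
    using in_X_br_H_gen_other[OF ij km] m True unfolding in_X_def by blast
  obtain c2 where c2: "Br ?h (Gen m l 1) \<simeq> Gen m l c2"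
    using in_X_br_H_gen_other[OF ij ml] m True unfolding in_X_def by blast
  have "Br ?h (Gen k l c) \<simeq> Br ?h (Br (Gen k m c) (Gen m l 1))"
    using cong_br_right[OF stl_eq.sym[OF br_gen_gen_chain[OF km ml kl, of c 1]]] by simp
  also have "\<dots> \<simeq> Add (Br (Br ?h (Gen k m c)) (Gen m l 1))
      (Smul (-1) (Br (Br ?h (Gen m l 1)) (Gen k m c)))"
    by (rule stl_eq.leibniz)
  finally have expand: "Br ?h (Gen k l c) \<simeq> \<dots>" .
  have "in_X n sm k l (Br (Br ?h (Gen k m c)) (Gen m l 1))"
    by (rule in_X_cong[OF stl_eq.trans[OF cong_br_left[OF c1] br_gen_gen_chain[OF km ml kl]]
          in_X_gen])
  moreover have "in_X n sm k l (Br (Br ?h (Gen m l 1)) (Gen k m c))"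
    by (rule in_X_cong[OF stl_eq.trans[OF cong_br_left[OF c2] br_gen_gen_cochain[OF ml km kl]]
          in_X_gen])
  ultimately show ?thesis
    using in_X_cong[OF expand] in_X_add[OF kl] in_X_smul[OF kl] by blast
qed

lemma in_X_br_H_span_gen: "H_span n h \<Longrightarrow> offdiag_pos n k l \<Longrightarrow> in_X n sm k l (Br h (Gen k l c))"
proof (induction rule: H_span.induct)
  case zero
  then show ?case using in_X_zero br_zero_left by blast
next
  case (gen i j a b)
  then show ?case using in_X_br_H_gen offdiag_pos_def by blast
next
  case (add x y)
  then show ?case using in_X_cong[OF stl_eq.br_add_left in_X_add] by blast
next
  case (smul x k)
  then show ?case using in_X_cong[OF stl_eq.br_smul_left in_X_smul] by blast
qed

lemma in_X_br_in_H_gen: "in_H n sm h \<Longrightarrow> offdiag_pos n k l \<Longrightarrow> in_X n sm k l (Br h (Gen k l c))"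
  unfolding in_H_def using in_X_cong[OF cong_br_left in_X_br_H_span_gen] by blast

lemma in_H_plus_X_br_gen:
  assumes "in_H_plus_X x" and kl: "offdiag_pos n k l"
  shows "in_H_plus_X (Br x (Gen k l c))"
proof -
  obtain h a where h: "H_span n h" and x: "x \<simeq> Add h (gen_sum a)"
    using assms(1) unfolding in_H_plus_X_def by blast
  let ?g = "Gen k l c"
  have "Br x ?g \<simeq> Add (Br h ?g) (Br (gen_sum a) ?g)"
    by (rule stl_eq.trans[OF cong_br_left[OF x] stl_eq.br_add_left])
  also have "\<dots> \<simeq> Add (Br h ?g) (esum (\<lambda>p. Br ((\<lambda>(i, j). Gen i j (a i j)) p) ?g) (offdiag n))"
    by (rule cong_add_right[OF br_esum_left])
  finally have expand: "Br x ?g \<simeq> \<dots>" .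
  obtain c' where "Br h ?g \<simeq> Gen k l c'"
    using in_X_br_H_span_gen[OF h kl] unfolding in_X_def by blast
  then have "in_H_plus_X (Br h ?g)" by (rule in_H_plus_X_cong[OF _ in_H_plus_X_gen[OF kl]])
  moreover have "in_H_plus_X (esum (\<lambda>p. Br ((\<lambda>(i, j). Gen i j (a i j)) p) ?g) (offdiag n))"
    by (rule in_H_plus_X_esum) (auto simp: set_offdiag intro: in_H_plus_X_br_gen_gen kl)
  ultimately show ?thesis by (rule in_H_plus_X_cong[OF expand in_H_plus_X_add])
qed

lemma in_H_plus_X_br: "wf_expr n y \<Longrightarrow> in_H_plus_X x \<Longrightarrow> in_H_plus_X (Br x y)"
proof (induction y arbitrary: x)
  case (Gen i j a)
  then show ?case by (simp add: in_H_plus_X_br_gen offdiag_pos_def valid_idx_def)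
next
  case Zero
  show ?case by (rule in_H_plus_X_cong[OF br_zero_right in_H_plus_X_H_span[OF H_span.zero]])
next
  case (Add y1 y2)
  then show ?case using in_H_plus_X_cong[OF stl_eq.br_add_right in_H_plus_X_add] by simp
next
  case (Smul k y)
  then show ?case using in_H_plus_X_cong[OF stl_eq.br_smul_right in_H_plus_X_smul] by simp
next
  case (Br y1 y2)
  then show ?case
    using in_H_plus_X_cong[OF stl_eq.leibniz in_H_plus_X_add[OF _ in_H_plus_X_smul]] by simp
qed

lemma in_H_plus_X_wf: "wf_expr n e \<Longrightarrow> in_H_plus_X e"
  by (induction e)
    (auto intro: in_H_plus_X_gen in_H_plus_X_H_span H_span.zero in_H_plus_X_add in_H_plus_X_smul
      in_H_plus_X_br simp: offdiag_pos_def valid_idx_def)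

lemma H_plus_gen_sum_decomposition: "wf_expr n e \<Longrightarrow> \<exists>h a. in_H n sm h \<and> e \<simeq> Add h (gen_sum a)"
  using in_H_plus_X_wf unfolding in_H_plus_X_def in_H_def
  by (blast intro: wf_expr_H_span stl_eq.refl)

lemma br_in_H_H_span: "H_span n y \<Longrightarrow> in_H n sm x \<Longrightarrow> \<exists>h. H_span n h \<and> Br x y \<simeq> h"
proof (induction rule: H_span.induct)
  case zero
  show ?case using H_span.zero br_zero_right by blast
next
  case (add y1 y2)
  then show ?case
    by (blast intro: H_span.add stl_eq.trans[OF stl_eq.br_add_right stl_eq.cong_add])
next
  case (smul y k)
  then show ?case
    by (blast intro: H_span.smul stl_eq.trans[OF stl_eq.br_smul_right stl_eq.cong_smul])
next
  case (gen k l c d)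
  then have kl: "offdiag_pos n k l" and lk: "offdiag_pos n l k" by (auto simp: offdiag_pos_def)
  obtain c' where c': "Br x (Gen k l c) \<simeq> Gen k l c'"
    using in_X_br_in_H_gen[OF gen.prems kl] unfolding in_X_def by blast
  obtain d' where d': "Br x (Gen l k d) \<simeq> Gen l k d'"
    using in_X_br_in_H_gen[OF gen.prems lk] unfolding in_X_def by blast
  have "Br x (Br (Gen k l c) (Gen l k d))
      \<simeq> Add (Br (Br x (Gen k l c)) (Gen l k d)) (Smul (-1) (Br (Br x (Gen l k d)) (Gen k l c)))"
    by (rule stl_eq.leibniz)
  also have "\<dots> \<simeq> Add (Br (Gen k l c') (Gen l k d)) (Smul (-1) (Br (Gen l k d') (Gen k l c)))"
    by (rule stl_eq.cong_add[OF cong_br_left[OF c'] stl_eq.cong_smul[OF cong_br_left[OF d']]])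
  finally show ?case
    using gen.hyps by (blast intro: H_span.add H_span.smul H_span.gen)
qed

lemma in_H_br: "in_H n sm x \<Longrightarrow> in_H n sm y \<Longrightarrow> in_H n sm (Br x y)"
proof -
  assume x: "in_H n sm x" and y: "in_H n sm y"
  then obtain hy where "H_span n hy" "y \<simeq> hy" unfolding in_H_def by blast
  moreover obtain h where "H_span n h" "Br x hy \<simeq> h"
    using br_in_H_H_span[OF \<open>H_span n hy\<close> x] by blast
  ultimately show ?thesis
    using x y unfolding in_H_def by (auto intro: stl_eq.trans[OF cong_br_right])
qed

lemma in_H_of_in_center:
  assumes central: "in_center n sm z"
  shows "in_H n sm z"
proof -
  have wf: "wf_expr n z" using central unfolding in_center_def by blast
  obtain h a where h: "in_H n sm h" and z: "z \<simeq> Add h (gen_sum a)"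
    using H_plus_gen_sum_decomposition[OF wf] by blast
  \<comment> \<open>The (i,q) entry of rep [z, X_pq(1)] is the (i,p) entry of rep z.\<close>
  have coeff: "a i p = 0" if ip: "offdiag_pos n i p" for i p
  proof -
    obtain q where q: "valid_idx n q" "q \<noteq> p"
      using exists_third_idx[OF three_le_n] by blast
    have p: "valid_idx n p" "i \<noteq> p" using ip by (auto simp: offdiag_pos_def)
    with q have "wf_expr n (Gen p q 1)" by (auto simp: valid_idx_def)
    with central have "rep (Br z (Gen p q 1)) = rep Zero"
      unfolding in_center_def by (blast intro: rep_stl_eq)
    then have "mat_bracket n (rep z) (mat_unit p q 1) i q = 0" by simp
    then have "rep z i p = 0"
      by (simp add: mat_bracket_def mat_mult_unit_right_entry[OF p(1)]
          mat_mult_unit_left_entry[OF p(2)])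
    with rep_stl_eq[OF z] show ?thesis by (simp add: rep_in_H[OF h p(2)] rep_gen_sum[OF ip])
  qed
  have "z \<simeq> Add h Zero" by (rule stl_eq.trans[OF z cong_add_right[OF gen_sum_zero[OF coeff]]])
  then have "z \<simeq> h" by (rule stl_eq.trans[OF _ stl_eq.add_zero])
  with h wf show ?thesis unfolding in_H_def by (blast intro: stl_eq.trans)
qed

end

theorem lemma2p5:
  fixes n :: nat
    and sm :: "'k::comm_ring_1 \<Rightarrow> 'r::ring_1 \<Rightarrow> 'r"
    and B :: "'r set"
  assumes n3: "n \<ge> 3"
    and alg: "is_K_algebra sm"
    and basis: "is_K_basis sm B"
    and one_in_B: "1 \<in> B"
  shows
    \<comment> \<open>H is a subalgebra\<close>
    "in_H n sm (Zero :: ('k, 'r) expr)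
     \<and> (\<forall>x y. in_H n sm x \<and> in_H n sm y \<longrightarrow> in_H n sm (Add x y))
     \<and> (\<forall>k x. in_H n sm x \<longrightarrow> in_H n sm (Smul k x))
     \<and> (\<forall>x y. in_H n sm x \<and> in_H n sm y \<longrightarrow> in_H n sm (Br x y))
     \<comment> \<open>H contains the center\<close>
     \<and> (\<forall>z. in_center n sm z \<longrightarrow> in_H n sm z)
     \<comment> \<open>[H, X_ij(R)] is contained in X_ij(R)\<close>
     \<and> (\<forall>h i j a. in_H n sm h \<and> valid_idx n i \<and> valid_idx n j \<and> i \<noteq> j \<longrightarrow>
          in_X n sm i j (Br h (Gen i j a)))
     \<comment> \<open>st l_n(R) = H + sum of X_ij(R)\<close>
     \<and> (\<forall>e. wf_expr n e \<longrightarrow>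
          (\<exists>h a. in_H n sm h \<and> stl_eq n sm e (Add h (esum (\<lambda>(i, j). Gen i j (a i j)) (offdiag n)))))
     \<comment> \<open>and the sum is direct\<close>
     \<and> (\<forall>h a. in_H n sm h \<and>
          stl_eq n sm (Add h (esum (\<lambda>(i, j). Gen i j (a i j)) (offdiag n))) Zero \<longrightarrow>
          stl_eq n sm h Zero \<and>
          (\<forall>i j. valid_idx n i \<and> valid_idx n j \<and> i \<noteq> j \<longrightarrow> stl_eq n sm (Gen i j (a i j)) Zero))"
proof -
  interpret K_algebra sm by (rule K_algebraI[OF alg])
  interpret steinberg_3 n sm by unfold_locales (rule n3)
  show ?thesis
    unfolding offdiag_pos_def[symmetric]
    by (intro conjI allI impI; (elim conjE)?;
        blast intro: in_H_zero in_H_add in_H_smul in_H_br in_H_of_in_center in_X_br_in_H_gen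
          H_plus_gen_sum_decomposition direct_sum_H_part direct_sum_X_part)
qed

end
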